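(* A nontrivial monoid $M$ in $\mathcal{C}$ is an HFM if and only if $\mathcal{A}(M)$ is contained in an affine hyperplane $H$ of $V=\mathbb{R}\otimes_\mathbb{Z}\mathrm{gp}(M)$ not containing the origin; moreover, in that case $\mathcal{A}(M)=M\cap H$.
   Context: Convention: all monoids are commutative, cancellative, and reduced, written additively; $M^\bullet=M\setminus\{0\}$; atoms $\mathcal{A}(M)=M^\bullet\setminus(M^\bullet+M^\bullet)$. $\mathcal{C}$ is the class of monoids isomorphic to a submonoid of a free commutative monoid of finite rank (equivalently, of $(\mathbb{N}^d,+)$). $M$ is regarded as a submonoid of $V$ via $M\hookrightarrow\mathrm{gp}(M)\hookrightarrow V$. A factorization of $x$ is a multiset of atoms summing to $x$, its length the number of atoms with multiplicity; $M$ is an HFM (half-factorial) if every element is a sum of atoms and any two factorizations of the same nonzero element have the same length. *)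

theory Defs
  imports "HOL-Analysis.Analysis" "HOL-Library.Multiset"
begin

text \<open>Monoids of class C are modelled concretely as submonoids of (N^d,+),
  viewed inside R^d (vectors with natural-number coordinates).\<close>

definition nat_vec :: "real^'n \<Rightarrow> bool" where
  "nat_vec x \<longleftrightarrow> (\<forall>i. x $ i \<in> \<nat>)"

definition submonoid_Nd :: "(real^'n) set \<Rightarrow> bool" where
  "submonoid_Nd M \<longleftrightarrow> (\<forall>x\<in>M. nat_vec x) \<and> 0 \<in> M \<and> (\<forall>x\<in>M. \<forall>y\<in>M. x + y \<in> M)"

definition atoms :: "(real^'n) set \<Rightarrow> (real^'n) set" where
  "atoms M = {a \<in> M - {0}. \<not> (\<exists>b\<in>M - {0}. \<exists>c\<in>M - {0}. a = b + c)}"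

definition factorization :: "(real^'n) set \<Rightarrow> real^'n \<Rightarrow> (real^'n) multiset \<Rightarrow> bool" where
  "factorization M x F \<longleftrightarrow> set_mset F \<subseteq> atoms M \<and> sum_mset F = x"

definition is_HFM :: "(real^'n) set \<Rightarrow> bool" where
  "is_HFM M \<longleftrightarrow> (\<forall>x\<in>M. \<exists>F. factorization M x F) \<and>
     (\<forall>x\<in>M - {0}. \<forall>F G. factorization M x F \<and> factorization M x G \<longrightarrow> size F = size G)"

definition affine_hyperplane_in :: "(real^'n) set \<Rightarrow> (real^'n) set \<Rightarrow> bool" where
  "affine_hyperplane_in V H \<longleftrightarrow>
     (\<exists>f c. linear f \<and> (\<exists>v\<in>V. f v \<noteq> (0::real)) \<and> H = {v \<in> V. f v = c})"

end

theory Submission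
  imports Defs
begin

text \<open>If M is half-factorial, the common length of the factorizations of an element is an
  additive function on M; since M consists of rational vectors, every real linear relation
  between elements of M comes from an integral one, so this length function extends to a linear
  functional on V, and the atoms lie on its level set 1. Conversely, a linear functional that
  takes a nonzero constant value c on all atoms takes the value c times the length on every
  factorization, so all factorizations of an element have the same length and the elements
  of M on its level set c are exactly the atoms (factorizations exist because the coordinate
  sum, a positive integer on nonzero elements, is additive).\<close>

definition rat_vec :: "real^'n \<Rightarrow> bool" where
  "rat_vec x \<longleftrightarrow> (\<forall>i. x $ i \<in> \<rat>)"

inductive_set rat_span :: "'a::real_vector set \<Rightarrow> 'a set" for S where
  zero: "0 \<in> rat_span S"
| add_scaled: "x \<in> rat_span S \<Longrightarrow> s \<in> S \<Longrightarrow> q \<in> \<rat> \<Longrightarrow> x + q *\<^sub>R s \<in> rat_span S"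

inductive_set monoid_hull :: "'a::real_vector set \<Rightarrow> 'a set" for B where
  zero: "0 \<in> monoid_hull B"
| base: "b \<in> B \<Longrightarrow> b \<in> monoid_hull B"
| add: "x \<in> monoid_hull B \<Longrightarrow> y \<in> monoid_hull B \<Longrightarrow> x + y \<in> monoid_hull B"

lemma rat_span_rat_vec:
  assumes "\<forall>s\<in>S. rat_vec s" "x \<in> rat_span S"
  shows "rat_vec x"
  using assms(2) by (induction x rule: rat_span.induct) (use assms(1) in \<open>auto simp: rat_vec_def\<close>)

lemma rat_span_mono:
  assumes "S \<subseteq> T" "x \<in> rat_span S"
  shows "x \<in> rat_span T"
  using assms(2) by (induction x rule: rat_span.induct) (use assms(1) in \<open>auto intro: rat_span.intros\<close>)

lemma rat_span_linear_image:
  assumes "linear f" "z \<in> rat_span (f ` S)"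
  shows "\<exists>y\<in>rat_span S. f y = z"
  using assms(2)
proof (induction z rule: rat_span.induct)
  case zero
  show ?case using linear_0[OF assms(1)] by (auto intro: rat_span.zero)
next
  case (add_scaled x s q)
  then obtain y t where "y \<in> rat_span S" "f y = x" "t \<in> S" "s = f t" by auto
  then show ?case using linear_add[OF assms(1)] linear_scale[OF assms(1)] add_scaled
    by (auto intro!: bexI[of _ "y + q *\<^sub>R t"] rat_span.intros)
qed

lemma rat_vec_in_span_imp_rat_span:
  fixes S :: "(real^'n) set"
  assumes "finite S" "\<forall>s\<in>S. rat_vec s" "rat_vec x" "x \<in> span S"
  shows "x \<in> rat_span S"
  using assms
proof (induction "card S" arbitrary: S x rule: less_induct)
  case less
  show ?case
  proof (cases "S = {}")
    case True
    then show ?thesis using less.prems by (auto intro: rat_span.zero)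
  next
    case False
    then obtain a where aS: "a \<in> S" by auto
    define S' where "S' = S - {a}"
    have S: "S = insert a S'" and S'_fin: "finite S'"
      using aS less.prems(1) by (auto simp: S'_def)
    have S'_card: "card S' < card S"
      unfolding S'_def by (rule card_Diff1_less[OF less.prems(1) aS])
    show ?thesis
    proof (cases "a = 0")
      case True
      then have "x \<in> rat_span S'" using less S S'_fin S'_card by auto
      then show ?thesis using rat_span_mono[of S' S] S by auto
    next
      case False
      then obtain j where j: "a $ j \<noteq> 0" by (metis vec_eq_iff zero_index)
      txt \<open>Gaussian elimination of the j-th coordinate along a.\<close>
      define P where "P v = v - (v $ j / a $ j) *\<^sub>R a" for v :: "real^'n"
      have P_linear: "linear P" unfolding P_def
        by (intro linear_compose_sub linearI) (auto simp: algebra_simps add_divide_distrib)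
      have P_rat: "rat_vec v \<Longrightarrow> rat_vec (P v)" for v
        using less.prems(2) aS by (auto simp: rat_vec_def P_def)
      have "P x \<in> span (P ` S)"
        using less.prems(4) span_linear_image[OF P_linear] by auto
      also have "P ` S = insert 0 (P ` S')" using S j by (simp add: P_def)
      finally have "P x \<in> span (P ` S')" by simp
      moreover have "card (P ` S') < card S"
        using card_image_le[OF S'_fin] S'_card by (meson le_less_trans)
      ultimately have "P x \<in> rat_span (P ` S')"
        using less.hyps S'_fin P_rat less.prems S by auto
      then obtain y where y: "y \<in> rat_span S'" "P y = P x"
        using rat_span_linear_image[OF P_linear] by blast
      have "rat_vec y" using rat_span_rat_vec y(1) less.prems(2) S by auto
      define q where "q = (x $ j - y $ j) / a $ j"
      have "q \<in> \<rat>" using \<open>rat_vec y\<close> less.prems(2,3) aS by (auto simp: q_def rat_vec_def)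
      moreover have "x = y + q *\<^sub>R a"
        using y(2) unfolding P_def q_def by (simp add: algebra_simps diff_divide_distrib)
      moreover have "y \<in> rat_span S" using rat_span_mono[of S' S] y S by auto
      ultimately show ?thesis using rat_span.add_scaled aS by metis
    qed
  qed
qed

lemma monoid_hull_scaleR_nat: "z \<in> monoid_hull B \<Longrightarrow> real k *\<^sub>R z \<in> monoid_hull B"
  by (induction k) (simp_all add: algebra_simps monoid_hull.zero monoid_hull.add)

lemma rat_span_clear_denominators:
  assumes "y \<in> rat_span B"
  shows "\<exists>N::nat. N > 0 \<and> (\<exists>u\<in>monoid_hull B. \<exists>w\<in>monoid_hull B. real N *\<^sub>R y + w = u)"
  using assms
proof (induction y rule: rat_span.induct)
  case zero
  then show ?case by (auto intro!: exI[of _ "1::nat"] bexI[of _ 0] monoid_hull.zero)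
next
  case (add_scaled x s q)
  then obtain N u w where N: "N > 0" "u \<in> monoid_hull B" "w \<in> monoid_hull B" "real N *\<^sub>R x + w = u"
    by blast
  obtain a b where ab: "b > 0" "q = of_int a / of_int b" using Rats_cases'[OF add_scaled(3)] by blast
  have s: "s \<in> monoid_hull B" using add_scaled(2) by (rule monoid_hull.base)
  have N': "N * nat b > 0" using N ab by simp
  have key: "real (N * nat b) *\<^sub>R (x + q *\<^sub>R s) + real (nat b) *\<^sub>R w
        = real (nat b) *\<^sub>R u + (real N * of_int a) *\<^sub>R s"
    using ab N(4) by (auto simp: algebra_simps)
  show ?case
  proof (cases "a \<ge> 0")
    case True
    then have "real (N * nat b) *\<^sub>R (x + q *\<^sub>R s) + real (nat b) *\<^sub>R w
        = real (nat b) *\<^sub>R u + real (N * nat a) *\<^sub>R s" using key by simp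
    moreover have "real (nat b) *\<^sub>R u + real (N * nat a) *\<^sub>R s \<in> monoid_hull B"
      "real (nat b) *\<^sub>R w \<in> monoid_hull B"
      by (intro monoid_hull.add monoid_hull_scaleR_nat N(2,3) s)+
    ultimately show ?thesis using N' by blast
  next
    case False
    then have "real (N * nat b) *\<^sub>R (x + q *\<^sub>R s) + (real (nat b) *\<^sub>R w + real (N * nat (-a)) *\<^sub>R s)
        = real (nat b) *\<^sub>R u" using key by (simp add: algebra_simps)
    moreover have "real (nat b) *\<^sub>R u \<in> monoid_hull B"
      "real (nat b) *\<^sub>R w + real (N * nat (-a)) *\<^sub>R s \<in> monoid_hull B"
      by (intro monoid_hull.add monoid_hull_scaleR_nat N(2,3) s)+
    ultimately show ?thesis using N' by blast
  qed
qed

lemma additive_on_rat_monoid_extends_linear: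
  fixes M :: "(real^'n) set" and l :: "real^'n \<Rightarrow> real"
  assumes M: "0 \<in> M" "\<forall>x\<in>M. \<forall>y\<in>M. x + y \<in> M" "\<forall>x\<in>M. rat_vec x"
    and l_add: "\<And>x y. x \<in> M \<Longrightarrow> y \<in> M \<Longrightarrow> l (x + y) = l x + l y"
  obtains f where "linear f" "\<And>m. m \<in> M \<Longrightarrow> f m = l m"
proof -
  have l_0: "l 0 = 0" using l_add[of 0 0] M(1) by simp
  obtain B where B: "B \<subseteq> M" "independent B" "M \<subseteq> span B" by (rule maximal_independent_subset)
  have "finite B" using independent_bound[OF B(2)] by blast
  obtain f :: "real^'n \<Rightarrow> real" where f: "linear f" "\<And>b. b \<in> B \<Longrightarrow> f b = l b"
    using linear_independent_extend[OF B(2), of l] by auto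
  have hull: "z \<in> M \<and> f z = l z" if "z \<in> monoid_hull B" for z
    using that
  proof (induction z rule: monoid_hull.induct)
    case zero then show ?case using M(1) l_0 linear_0[OF f(1)] by simp
  next
    case (base b) then show ?case using B(1) f(2) by auto
  next
    case (add x y) then show ?case using M(2) l_add linear_add[OF f(1)] by simp
  qed
  have "f m = l m" if m: "m \<in> M" for m
  proof -
    have "m \<in> rat_span B"
      using rat_vec_in_span_imp_rat_span[OF \<open>finite B\<close>] M(3) B m by blast
    then obtain N u w where N: "N > 0" "u \<in> monoid_hull B" "w \<in> monoid_hull B"
      and Nm: "real N *\<^sub>R m + w = u"
      using rat_span_clear_denominators by blast
    have multiple: "real k *\<^sub>R m \<in> M \<and> l (real k *\<^sub>R m) = real k * l m" for k :: nat
      by (induction k) (use M(1,2) m l_0 l_add in \<open>auto simp: algebra_simps\<close>)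
    have "real N * f m + f w = f u"
      using Nm by (auto simp: linear_add[OF f(1)] linear_scale[OF f(1)])
    also have "f u = l (real N *\<^sub>R m + w)" using hull N(2) Nm by simp
    also have "\<dots> = real N * l m + f w" using multiple hull N(3) l_add by simp
    finally show ?thesis using N(1) by simp
  qed
  with f(1) show ?thesis by (rule that)
qed

lemma linear_sum_mset: "linear f \<Longrightarrow> f (sum_mset F) = (\<Sum>x\<in>#F. f x)"
  by (induction F) (auto simp: linear_0 linear_add)

lemma linear_factorization:
  fixes f :: "real^'n \<Rightarrow> real"
  assumes "linear f" "\<forall>a\<in>atoms M. f a = c" "factorization M x F"
  shows "f x = c * size F"
proof -
  have "x = sum_mset F" using assms(3) by (simp add: factorization_def)
  then have "f x = (\<Sum>a\<in>#F. f a)" using linear_sum_mset[OF assms(1)] by simp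
  also have "\<dots> = (\<Sum>a\<in>#F. c)" using assms(2,3) by (intro arg_cong[of _ _ sum_mset] image_mset_cong)
      (auto simp: factorization_def)
  finally show ?thesis by simp
qed

definition coord_sum :: "real^'n \<Rightarrow> real" where
  "coord_sum x = (\<Sum>i\<in>UNIV. x $ i)"

lemma linear_coord_sum: "linear coord_sum"
  unfolding coord_sum_def by (intro linearI) (simp_all add: sum.distrib sum_distrib_left)

lemma nat_vec_rat_vec: "nat_vec x \<Longrightarrow> rat_vec x"
  unfolding nat_vec_def rat_vec_def using Nats_subset_Rats by blast

lemma coord_sum_ge_1:
  assumes "nat_vec x" "x \<noteq> 0"
  shows "coord_sum x \<ge> 1"
proof -
  have nonneg: "x $ i \<ge> 0" for i
    using assms(1) unfolding nat_vec_def by (metis Nats_cases of_nat_0_le_iff)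
  obtain i where "x $ i \<noteq> 0" using assms(2) by (metis vec_eq_iff zero_index)
  moreover have "x $ i \<in> \<nat>" using assms(1) unfolding nat_vec_def by auto
  ultimately have "x $ i \<ge> 1" by (metis Nats_cases of_nat_0 of_nat_1 of_nat_le_iff less_one not_le)
  also have "x $ i \<le> coord_sum x" unfolding coord_sum_def using nonneg by (intro member_le_sum) auto
  finally show ?thesis .
qed

lemma factorization_exists:
  assumes M: "submonoid_Nd M" and "x \<in> M"
  shows "\<exists>F. factorization M x F"
  using assms(2)
proof (induction "nat \<lceil>coord_sum x\<rceil>" arbitrary: x rule: less_induct)
  case less
  show ?case
  proof (cases "x = 0 \<or> x \<in> atoms M")
    case True
    then show ?thesis by (auto intro: exI[of _ "{#}"] exI[of _ "{#x#}"] simp: factorization_def)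
  next
    case False
    then obtain b c where bc: "b \<in> M" "c \<in> M" "b \<noteq> 0" "c \<noteq> 0" "x = b + c"
      using less.prems unfolding atoms_def by auto
    have "coord_sum b \<ge> 1" "coord_sum c \<ge> 1"
      using M bc coord_sum_ge_1 unfolding submonoid_Nd_def by blast+
    moreover have "coord_sum x = coord_sum b + coord_sum c"
      using bc(5) linear_add[OF linear_coord_sum] by simp
    ultimately have "nat \<lceil>coord_sum b\<rceil> < nat \<lceil>coord_sum x\<rceil>" "nat \<lceil>coord_sum c\<rceil> < nat \<lceil>coord_sum x\<rceil>"
      by linarith+
    then obtain F G where "factorization M b F" "factorization M c G"
      using less.hyps bc by blast
    then have "factorization M x (F + G)" using bc by (auto simp: factorization_def)
    then show ?thesis by blast
  qed
qed

lemma size_factorization_le_coord_sum: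
  assumes M: "submonoid_Nd M" and F: "factorization M x F"
  shows "real (size F) \<le> coord_sum x"
proof -
  have "nat_vec a \<and> a \<noteq> 0" if "a \<in># F" for a
    using that F M by (auto simp: factorization_def atoms_def submonoid_Nd_def)
  then have "(\<Sum>a\<in>#F. (1::real)) \<le> (\<Sum>a\<in>#F. coord_sum a)"
    using coord_sum_ge_1 by (intro sum_mset_mono) auto
  also have "\<dots> = coord_sum (sum_mset F)" by (simp add: linear_sum_mset[OF linear_coord_sum])
  also have "\<dots> = coord_sum x" using F by (simp add: factorization_def)
  finally show ?thesis by simp
qed

lemma factorization_zero:
  assumes "submonoid_Nd M" "factorization M 0 F"
  shows "F = {#}"
proof -
  have "real (size F) \<le> 0"
    using size_factorization_le_coord_sum[OF assms] by (simp add: linear_0[OF linear_coord_sum])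
  then show ?thesis by simp
qed

lemma is_HFM_if_linear_const_on_atoms:
  fixes f :: "real^'n \<Rightarrow> real"
  assumes M: "submonoid_Nd M" and f: "linear f" "c \<noteq> 0" "\<forall>a\<in>atoms M. f a = c"
  shows "is_HFM M"
  unfolding is_HFM_def
proof (intro conjI ballI allI impI)
  show "\<exists>F. factorization M x F" if "x \<in> M" for x using factorization_exists[OF M that] .
  fix x F G assume "factorization M x F \<and> factorization M x G"
  then have "c * size F = c * size G" using linear_factorization[OF f(1,3)] by metis
  then show "size F = size G" using f(2) by simp
qed

lemma atoms_eq_level_set:
  fixes f :: "real^'n \<Rightarrow> real"
  assumes M: "submonoid_Nd M" and f: "linear f" "c \<noteq> 0" "\<forall>a\<in>atoms M. f a = c"
  shows "atoms M = {x \<in> M. f x = c}"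
proof
  show "atoms M \<subseteq> {x \<in> M. f x = c}" using f(3) by (auto simp: atoms_def)
  show "{x \<in> M. f x = c} \<subseteq> atoms M"
  proof
    fix x assume x: "x \<in> {x \<in> M. f x = c}"
    then obtain F where F: "factorization M x F" using factorization_exists[OF M] by blast
    have "c * size F = c" using linear_factorization[OF f(1,3) F] x by simp
    then have "size F = 1" using f(2) by simp
    then obtain a where "F = {#a#}" using size_1_singleton_mset by blast
    then show "x \<in> atoms M" using F by (auto simp: factorization_def)
  qed
qed

definition fact_length :: "(real^'n) set \<Rightarrow> real^'n \<Rightarrow> nat" where
  "fact_length M x = size (SOME F. factorization M x F)"

lemma fact_length_eq:
  assumes M: "submonoid_Nd M" "is_HFM M" and F: "factorization M x F" and x: "x \<in> M"
  shows "fact_length M x = size F"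
proof -
  let ?G = "SOME F. factorization M x F"
  have G: "factorization M x ?G" using F by (rule someI)
  show ?thesis
  proof (cases "x = 0")
    case True
    then have "F = {#}" "?G = {#}" using factorization_zero[OF M(1)] F G by auto
    then show ?thesis by (simp add: fact_length_def)
  next
    case False
    then show ?thesis using M(2) x F G unfolding is_HFM_def fact_length_def by blast
  qed
qed

lemma fact_length_add:
  assumes M: "submonoid_Nd M" "is_HFM M" and xy: "x \<in> M" "y \<in> M"
  shows "fact_length M (x + y) = fact_length M x + fact_length M y"
proof -
  obtain F G where F: "factorization M x F" "factorization M y G"
    using factorization_exists[OF M(1)] xy by blast
  then have "factorization M (x + y) (F + G)" by (auto simp: factorization_def)
  moreover have "x + y \<in> M" using M(1) xy unfolding submonoid_Nd_def by blast
  ultimately show ?thesis using fact_length_eq[OF M] F xy by simp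
qed

lemma hyperplane_containing_atoms_if_is_HFM:
  fixes M :: "(real^'n) set"
  assumes M: "submonoid_Nd M" "M \<noteq> {0}" "is_HFM M"
  shows "\<exists>H. affine_hyperplane_in (span M) H \<and> 0 \<notin> H \<and> atoms M \<subseteq> H"
proof -
  have M': "0 \<in> M" "\<forall>x\<in>M. \<forall>y\<in>M. x + y \<in> M" "\<forall>x\<in>M. rat_vec x"
    using M(1) nat_vec_rat_vec unfolding submonoid_Nd_def by auto
  obtain f :: "real^'n \<Rightarrow> real"
    where f: "linear f" "\<And>m. m \<in> M \<Longrightarrow> f m = real (fact_length M m)"
    by (rule additive_on_rat_monoid_extends_linear[OF M', of "\<lambda>m. real (fact_length M m)"])
      (use fact_length_add[OF M(1,3)] in auto)
  have f_atom: "f a = 1" if "a \<in> atoms M" for a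
    using that f(2) fact_length_eq[OF M(1,3), of a "{#a#}"] by (simp add: factorization_def atoms_def)
  obtain m where m: "m \<in> M" "m \<noteq> 0" using M(1,2) unfolding submonoid_Nd_def by blast
  obtain F where F: "factorization M m F" using factorization_exists[OF M(1) m(1)] by blast
  have "F \<noteq> {#}" using F m(2) by (auto simp: factorization_def)
  then have "f m \<noteq> 0" using f(2) fact_length_eq[OF M(1,3) F m(1)] m(1) by simp
  then have "affine_hyperplane_in (span M) {v \<in> span M. f v = 1}"
    unfolding affine_hyperplane_in_def using f(1) m(1) span_base by blast
  moreover have "atoms M \<subseteq> {v \<in> span M. f v = 1}"
    using f_atom span_base by (auto simp: atoms_def)
  moreover have "0 \<notin> {v \<in> span M. f v = 1}" using linear_0[OF f(1)] by simp
  ultimately show ?thesis by blast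
qed

theorem mainTheorem9:
  fixes M :: "(real^'n) set"
  assumes "submonoid_Nd M" and "M \<noteq> {0}"
  shows "(is_HFM M \<longleftrightarrow>
            (\<exists>H. affine_hyperplane_in (span M) H \<and> 0 \<notin> H \<and> atoms M \<subseteq> H)) \<and>
         (\<forall>H. affine_hyperplane_in (span M) H \<and> 0 \<notin> H \<and> atoms M \<subseteq> H
               \<longrightarrow> atoms M = M \<inter> H)"
proof -
  have "is_HFM M \<and> atoms M = M \<inter> H"
    if H: "affine_hyperplane_in (span M) H" "0 \<notin> H" "atoms M \<subseteq> H" for H
  proof -
    obtain f :: "real^'n \<Rightarrow> real" and c where f: "linear f" "H = {v \<in> span M. f v = c}"
      using H(1) unfolding affine_hyperplane_in_def by blast
    have "c \<noteq> 0" using H(2) f linear_0[OF f(1)] span_0[of M] by auto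
    moreover have "\<forall>a\<in>atoms M. f a = c" using H(3) f(2) by auto
    moreover have "M \<inter> H = {x \<in> M. f x = c}" using f(2) span_base by auto
    ultimately show ?thesis
      using is_HFM_if_linear_const_on_atoms[OF assms(1) f(1)] atoms_eq_level_set[OF assms(1) f(1)]
      by simp
  qed
  then show ?thesis using hyperplane_containing_atoms_if_is_HFM[OF assms] by blast
qed

end
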